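(* Let $n\ge 7$ be any integer (not necessarily prime) with $n\equiv 1$ or $5\pmod 6$. Then: (R) there exists a one-factorization $\mathcal{R}$ of $K_{2n}$ on $\{0,\dots,2n-1\}$ such that, if $n\equiv5\pmod 6$, $\mathcal{R}=\{\mathcal{R}_{i,j}:1\le i\le\frac{2n-1}{3},1\le j\le3\}$ with $\mathcal{R}_{i,1}\cup\mathcal{R}_{i,2}\cup\mathcal{R}_{i,3}=\mathcal{A}_i\cup\mathcal{B}_i\cup\mathcal{C}_{i-1}$ for $1\le i\le\frac{n-1}{2}$ and $\mathcal{R}_{i,1}=\mathcal{C}_{3i-n-2}$, $\mathcal{R}_{i,2}=\mathcal{C}_{3i-n-1}$, $\mathcal{R}_{i,3}=\mathcal{C}_{3i-n}$ for $\frac{n+1}{2}\le i\le\frac{2n-1}{3}$; and, if $n\equiv1\pmod6$, $\mathcal{R}=\{\mathcal{R}_{i,j}:1\le i\le\frac{n-1}{2},1\le j\le3\}\cup\{\mathcal{C}_i:\frac{n-1}{2}\le i\le n-1\}$ with $\mathcal{R}_{i,1}\cup\mathcal{R}_{i,2}\cup\mathcal{R}_{i,3}=\mathcal{A}_i\cup\mathcal{B}_i\cup\mathcal{C}_{i-1}$ for $1\le i\le\frac{n-1}{2}$; (T) there exists a one-factorization $\mathcal{T}$ of $K_{2n}$ on $\{0,\dots,2n-1\}$ with exactly the same properties with $\mathcal{R}$ replaced by $\mathcal{T}$ and every $\mathcal{C}_k$ replaced by $\mathcal{D}_k$.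
   Context: For $1\le i\le \frac{n-1}{2}$: $\mathcal{A}_i=\{\{x,y\}: x,y\in\{0,\dots,n-1\},\ y-x\equiv i \pmod n\}$ and $\mathcal{B}_i=\{\{x,y\}: x,y\in\{n,\dots,2n-1\},\ y-x\equiv i\pmod n\}$. For $0\le i\le n-1$: $\mathcal{C}_i=\{\{x,y\}: 0\le x\le n-1,\ n\le y\le 2n-1,\ x+y\equiv i\pmod n\}$ and $\mathcal{D}_i=\{\{x,y\}: 0\le x\le n-1,\ n\le y\le 2n-1,\ y-x\equiv i\pmod n\}$. A one-factor of $K_{2n}$ is a perfect matching; a one-factorization is a partition of the edge set of $K_{2n}$ into $2n-1$ one-factors. *)

theory Defs
  imports Main "HOL-Number_Theory.Cong"
begin

definition edges_K :: "nat \<Rightarrow> nat set set" where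
  "edges_K m = {{x, y} | x y. x < m \<and> y < m \<and> x \<noteq> y}"

definition one_factor :: "nat \<Rightarrow> nat set set \<Rightarrow> bool" where
  "one_factor m M \<longleftrightarrow> M \<subseteq> edges_K m \<and> (\<forall>v<m. \<exists>!e. e \<in> M \<and> v \<in> e)"

definition one_factorization :: "nat \<Rightarrow> nat set set set \<Rightarrow> bool" where
  "one_factorization m F \<longleftrightarrow>
     (\<forall>M\<in>F. one_factor m M) \<and>
     (\<forall>M\<in>F. \<forall>M'\<in>F. M \<noteq> M' \<longrightarrow> M \<inter> M' = {}) \<and>
     \<Union>F = edges_K m \<and> finite F \<and> card F = m - 1"

definition A_fam :: "nat \<Rightarrow> nat \<Rightarrow> nat set set" where
  "A_fam n i = {{x, y} | x y. x < n \<and> y < n \<and> [int y - int x = int i] (mod int n)}"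

definition B_fam :: "nat \<Rightarrow> nat \<Rightarrow> nat set set" where
  "B_fam n i = {{x, y} | x y. n \<le> x \<and> x < 2*n \<and> n \<le> y \<and> y < 2*n \<and>
                            [int y - int x = int i] (mod int n)}"

definition C_fam :: "nat \<Rightarrow> nat \<Rightarrow> nat set set" where
  "C_fam n i = {{x, y} | x y. x < n \<and> n \<le> y \<and> y < 2*n \<and> [x + y = i] (mod n)}"

definition D_fam :: "nat \<Rightarrow> nat \<Rightarrow> nat set set" where
  "D_fam n i = {{x, y} | x y. x < n \<and> n \<le> y \<and> y < 2*n \<and>
                            [int y - int x = int i] (mod int n)}"

text \<open>The property required of R (with X = C_fam n) resp. of T (with X = D_fam n).
  R i j stands for the one-factor R_{i,j}.\<close>
definition lemma6_prop :: "nat \<Rightarrow> (nat \<Rightarrow> nat set set) \<Rightarrow> (nat \<Rightarrow> nat \<Rightarrow> nat set set) \<Rightarrow> bool" where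
  "lemma6_prop n X R \<longleftrightarrow>
    (n mod 6 = 5 \<longrightarrow>
       one_factorization (2*n)
         {R i j | i j. 1 \<le> i \<and> i \<le> (2*n - 1) div 3 \<and> 1 \<le> j \<and> j \<le> 3} \<and>
       (\<forall>i. 1 \<le> i \<and> i \<le> (n - 1) div 2 \<longrightarrow>
          R i 1 \<union> R i 2 \<union> R i 3 = A_fam n i \<union> B_fam n i \<union> X (i - 1)) \<and>
       (\<forall>i. (n + 1) div 2 \<le> i \<and> i \<le> (2*n - 1) div 3 \<longrightarrow>
          R i 1 = X (3*i - n - 2) \<and> R i 2 = X (3*i - n - 1) \<and> R i 3 = X (3*i - n))) \<and>
    (n mod 6 = 1 \<longrightarrow>
       one_factorization (2*n)
         ({R i j | i j. 1 \<le> i \<and> i \<le> (n - 1) div 2 \<and> 1 \<le> j \<and> j \<le> 3} \<union>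
          {X i | i. (n - 1) div 2 \<le> i \<and> i \<le> n - 1}) \<and>
       (\<forall>i. 1 \<le> i \<and> i \<le> (n - 1) div 2 \<longrightarrow>
          R i 1 \<union> R i 2 \<union> R i 3 = A_fam n i \<union> B_fam n i \<union> X (i - 1)))"

end

theory Submission
  imports Defs
begin

text \<open>
  Split \<open>K\<^sub>2\<^sub>n\<close> into the complete graphs on \<open>{0..<n}\<close> and \<open>{n..<2n}\<close> and the complete
  bipartite graph between them. For odd \<open>n\<close> the first is the edge-disjoint union of the circulant
  2-factors \<open>A\<^sub>i\<close>, \<open>1 \<le> i \<le> (n-1)/2\<close>, the second that of the \<open>B\<^sub>i\<close>, and the bipartite part is the
  union of the \<open>n\<close> perfect matchings \<open>X\<^sub>k = {{a, n + s\<^sub>k a}}\<close> (\<open>X = C\<close> or \<open>X = D\<close>), where each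
  permutation \<open>s\<^sub>k\<close> maps every cycle of step \<open>i\<close> onto itself.

  Hence the cubic graph \<open>A\<^sub>i \<union> B\<^sub>i \<union> X\<^sub>i\<^sub>-\<^sub>1\<close> can be 3-edge-coloured by hand: the edge \<open>{a, a+i}\<close>
  of \<open>A\<^sub>i\<close> gets colour 3 if it wraps around modulo \<open>n\<close> and otherwise 1 or 2 by the parity of
  \<open>a div i\<close>; the edge \<open>{n + s a, n + s (a+i)}\<close> of \<open>B\<^sub>i\<close> copies that colour; and the edge
  \<open>{a, n + s a}\<close> gets the colour missing at \<open>a\<close>. These \<open>3(n-1)/2\<close> colour classes together with
  the unused matchings \<open>X\<^sub>k\<close>, \<open>(n-1)/2 \<le> k < n\<close>, are the \<open>2n-1\<close> one-factors; for \<open>n \<equiv> 5 (mod 6)\<close>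
  the unused matchings are grouped into consecutive triples.
\<close>

definition shift :: "nat \<Rightarrow> nat \<Rightarrow> nat \<Rightarrow> nat" where
  "shift n i a = (a + i) mod n"

definition shift_back :: "nat \<Rightarrow> nat \<Rightarrow> nat \<Rightarrow> nat" where
  "shift_back n i a = (a + (n - i)) mod n"

lemma shift_eq_if: "a < n \<Longrightarrow> i < n \<Longrightarrow> shift n i a = (if a + i < n then a + i else a + i - n)"
  by (simp add: shift_def mod_if)

lemma shift_back_eq_if: "a < n \<Longrightarrow> i < n \<Longrightarrow> shift_back n i a = (if i \<le> a then a - i else a + n - i)"
  by (auto simp add: shift_back_def mod_if)

lemma shift_less: "0 < n \<Longrightarrow> shift n i a < n"
  by (simp add: shift_def)

lemma shift_back_less: "0 < n \<Longrightarrow> shift_back n i a < n"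
  by (simp add: shift_back_def)

lemma shift_shift_back: "a < n \<Longrightarrow> i < n \<Longrightarrow> shift n i (shift_back n i a) = a"
  by (auto simp: shift_eq_if shift_back_eq_if shift_back_less)

lemma shift_back_shift: "a < n \<Longrightarrow> i < n \<Longrightarrow> shift_back n i (shift n i a) = a"
  by (auto simp: shift_eq_if shift_back_eq_if shift_less)

lemma shift_neq: "a < n \<Longrightarrow> 0 < i \<Longrightarrow> i < n \<Longrightarrow> shift n i a \<noteq> a"
  by (auto simp: shift_eq_if)

lemma shift_neq_shift_back: "a < n \<Longrightarrow> 0 < i \<Longrightarrow> 2 * i < n \<Longrightarrow> shift n i a \<noteq> shift_back n i a"
  by (auto simp: shift_eq_if shift_back_eq_if)

lemma cong_diff_iff_shift:
  assumes "x < n" "y < n"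
  shows "[int y - int x = int i] (mod int n) \<longleftrightarrow> y = shift n i x"
proof -
  have "[int y - int x = int i] (mod int n) \<longleftrightarrow> [y = x + i] (mod n)"
    by (simp add: cong_iff_lin cong_int_iff[symmetric] cong_diff_iff_cong_0 algebra_simps)
  also have "\<dots> \<longleftrightarrow> y = shift n i x"
    using assms by (simp add: cong_def shift_def)
  finally show ?thesis .
qed

lemma cong_add_iff_shift_back:
  assumes "x < n" "y < n"
  shows "[x + y = k] (mod n) \<longleftrightarrow> y = shift_back n x k"
proof -
  have "[x + y = k] (mod n) \<longleftrightarrow> [x + y = x + (k + (n - x))] (mod n)"
    using assms by (simp add: cong_def algebra_simps)
  also have "\<dots> \<longleftrightarrow> y = shift_back n x k"
    unfolding cong_add_lcancel_nat using assms by (simp add: cong_def shift_back_def)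
  finally show ?thesis .
qed

lemma A_fam_eq: "A_fam n i = {{a, shift n i a} | a. a < n}"
proof (intro set_eqI iffI)
  fix e assume "e \<in> A_fam n i"
  then show "e \<in> {{a, shift n i a} | a. a < n}"
    unfolding A_fam_def by (auto simp: cong_diff_iff_shift)
next
  fix e assume "e \<in> {{a, shift n i a} | a. a < n}"
  then obtain a where a: "a < n" "e = {a, shift n i a}" by blast
  then have "shift n i a < n" "[int (shift n i a) - int a = int i] (mod int n)"
    using shift_less[of n] cong_diff_iff_shift[of a n "shift n i a" i] by simp_all
  with a show "e \<in> A_fam n i"
    unfolding A_fam_def by blast
qed

lemma B_fam_eq: "B_fam n i = {{n + a, n + shift n i a} | a. a < n}"
proof (intro set_eqI iffI)
  fix e assume "e \<in> B_fam n i"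
  then obtain x y where xy: "e = {x, y}" "n \<le> x" "x < 2 * n" "n \<le> y" "y < 2 * n"
    "[int y - int x = int i] (mod int n)"
    unfolding B_fam_def by blast
  moreover have "int y - int x = int (y - n) - int (x - n)" using xy by simp
  ultimately have "y - n = shift n i (x - n)"
    using cong_diff_iff_shift[of "x - n" n "y - n" i] xy by (simp only:)
  then have "y = n + shift n i (x - n)" using xy by linarith
  then have "e = {n + (x - n), n + shift n i (x - n)}" using xy by simp
  moreover have "x - n < n" using xy by simp
  ultimately show "e \<in> {{n + a, n + shift n i a} | a. a < n}" by blast
next
  fix e assume "e \<in> {{n + a, n + shift n i a} | a. a < n}"
  then obtain a where a: "a < n" "e = {n + a, n + shift n i a}" by blast
  then have "[int (n + shift n i a) - int (n + a) = int i] (mod int n)"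
    using cong_diff_iff_shift[of a n "shift n i a" i] shift_less[of n] a(1) by simp
  moreover have "n + shift n i a < 2 * n" using shift_less[of n] a(1) by simp
  ultimately show "e \<in> B_fam n i"
    unfolding B_fam_def using a by (intro CollectI exI[of _ "n + a"] exI[of _ "n + shift n i a"]) auto
qed

lemma cong_add_shift_right: "[x + (n + y) = k] (mod n) \<longleftrightarrow> [x + y = k] (mod (n::nat))"
  by (simp add: cong_def add.left_commute[of x n])

lemma C_fam_eq: "C_fam n k = {{a, n + shift_back n a k} | a. a < n}"
proof (intro set_eqI iffI)
  fix e assume "e \<in> C_fam n k"
  then obtain x y where xy: "e = {x, y}" "x < n" "n \<le> y" "y < 2 * n" "[x + y = k] (mod n)"
    unfolding C_fam_def by blast
  then have "[x + (n + (y - n)) = k] (mod n)" by simp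
  then have "y - n = shift_back n x k"
    using cong_add_iff_shift_back[of x n "y - n" k] xy by (simp only: cong_add_shift_right)
  then have "e = {x, n + shift_back n x k}" using xy by auto
  then show "e \<in> {{a, n + shift_back n a k} | a. a < n}" using xy(2) by blast
next
  fix e assume "e \<in> {{a, n + shift_back n a k} | a. a < n}"
  then obtain a where a: "a < n" "e = {a, n + shift_back n a k}" by blast
  have "[a + shift_back n a k = k] (mod n)"
    using cong_add_iff_shift_back[of a n "shift_back n a k" k] a(1) shift_back_less[of n] by simp
  then have "[a + (n + shift_back n a k) = k] (mod n)" by (simp only: cong_add_shift_right)
  moreover have "n + shift_back n a k < 2 * n" using shift_back_less[of n] a(1) by simp
  ultimately show "e \<in> C_fam n k"
    unfolding C_fam_def using a le_add1 by blast
qed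

lemma D_fam_eq: "D_fam n k = {{a, n + shift n k a} | a. a < n}"
proof (intro set_eqI iffI)
  fix e assume "e \<in> D_fam n k"
  then obtain x y where xy: "e = {x, y}" "x < n" "n \<le> y" "y < 2 * n"
    "[int y - int x = int k] (mod int n)"
    unfolding D_fam_def by blast
  moreover have "int (y - n) - int x = (int y - int x) - int n" using xy by simp
  ultimately have "[int (y - n) - int x = int k] (mod int n)"
    unfolding cong_def by (simp only: minus_mod_self2)
  then have "y - n = shift n k x" using cong_diff_iff_shift[of x n "y - n" k] xy by simp
  then have "e = {x, n + shift n k x}" using xy by auto
  then show "e \<in> {{a, n + shift n k a} | a. a < n}" using xy(2) by blast
next
  fix e assume "e \<in> {{a, n + shift n k a} | a. a < n}"
  then obtain a where a: "a < n" "e = {a, n + shift n k a}" by blast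
  have "[int (shift n k a) - int a = int k] (mod int n)"
    using cong_diff_iff_shift[of a n "shift n k a" k] a(1) shift_less[of n] by simp
  moreover have "int (n + shift n k a) - int a = (int (shift n k a) - int a) + int n" by simp
  ultimately have "[int (n + shift n k a) - int a = int k] (mod int n)"
    unfolding cong_def by (simp only: mod_add_self2)
  moreover have "n + shift n k a < 2 * n" using shift_less[of n] a(1) by simp
  ultimately show "e \<in> D_fam n k"
    unfolding D_fam_def using a le_add1 by blast
qed

text \<open>As \<open>2i < n\<close>, two wrap-around edges (colour 3) never meet,
  and adjacent non-wrapping edges lie in consecutive blocks \<open>a div i\<close>, so colours 1 and 2 alternate.\<close>

definition cycle_colour :: "nat \<Rightarrow> nat \<Rightarrow> nat \<Rightarrow> nat" where
  "cycle_colour n i a = (if n \<le> a + i then 3 else a div i mod 2 + 1)"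

definition third_colour :: "nat \<Rightarrow> nat \<Rightarrow> nat" where
  "third_colour c c' = 6 - c - c'"

lemma cycle_colour_range: "cycle_colour n i a \<in> {1, 2, 3}"
  unfolding cycle_colour_def by (cases "a div i mod 2 = 0") auto

lemma cycle_colour_shift:
  assumes "a < n" "0 < i" "2 * i < n"
  shows "cycle_colour n i (shift n i a) \<noteq> cycle_colour n i a"
proof (cases "n \<le> a + i + i")
  case True
  then show ?thesis using assms by (auto simp: cycle_colour_def shift_eq_if)
next
  case False
  have "(a + i) div i = a div i + 1" using assms by (simp add: div_add_self2)
  moreover have "Suc m mod 2 \<noteq> m mod 2" for m :: nat by presburger
  ultimately show ?thesis using assms False by (auto simp: cycle_colour_def shift_eq_if)
qed

lemma cycle_colour_shift_back:
  assumes "a < n" "0 < i" "2 * i < n"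
  shows "cycle_colour n i (shift_back n i a) \<noteq> cycle_colour n i a"
  using cycle_colour_shift[of "shift_back n i a" n i] assms
  by (simp add: shift_back_less shift_shift_back)

lemma third_colour_completes:
  assumes "c \<in> {1, 2, 3}" "c' \<in> {1, 2, 3}" "c \<noteq> c'"
  shows "third_colour c c' \<in> {1, 2, 3}" "third_colour c c' \<noteq> c" "third_colour c c' \<noteq> c'"
    and "d \<in> {1, 2, 3} \<Longrightarrow> d = c \<or> d = c' \<or> d = third_colour c c'"
  using assms by (auto simp: third_colour_def)

lemma ex1_incident_edge_of_colour:
  assumes incident: "\<And>e. e \<in> M \<and> v \<in> e \<longleftrightarrow>
      (e = E1 \<and> c1 = c) \<or> (e = E2 \<and> c2 = c) \<or> (e = E3 \<and> third_colour c1 c2 = c)"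
    and "c1 \<in> {1, 2, 3}" "c2 \<in> {1, 2, 3}" "c1 \<noteq> c2" "c \<in> {1, 2, 3}"
  shows "\<exists>!e. e \<in> M \<and> v \<in> e"
proof -
  have "c = c1 \<or> c = c2 \<or> c = third_colour c1 c2"
    using third_colour_completes(4) assms(2-5) by blast
  moreover note third_colour_completes(2,3)[OF assms(2-4)] \<open>c1 \<noteq> c2\<close>
  ultimately show ?thesis unfolding incident by metis
qed

lemma incident_edge_colour_unique:
  assumes incident: "\<And>c e. e \<in> M c \<and> v \<in> e \<longleftrightarrow>
      (e = E1 \<and> c1 = c) \<or> (e = E2 \<and> c2 = c) \<or> (e = E3 \<and> c3 = c)"
    and "distinct [E1, E2, E3]" "e \<in> M c" "e \<in> M c'" "v \<in> e"
  shows "c = c'"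
  using incident[of e c] incident[of e c'] assms(2-) by auto

lemma edge_in_edges_K: "p < m \<Longrightarrow> q < m \<Longrightarrow> p \<noteq> q \<Longrightarrow> {p, q} \<in> edges_K m"
  unfolding edges_K_def by blast

lemma one_factor_nonempty: "one_factor m M \<Longrightarrow> 0 < m \<Longrightarrow> M \<noteq> {}"
  unfolding one_factor_def by blast

lemma card_image_disjoint_nonempty:
  assumes "\<And>i. i \<in> I \<Longrightarrow> f i \<noteq> {}"
    and "\<And>i j. i \<in> I \<Longrightarrow> j \<in> I \<Longrightarrow> i \<noteq> j \<Longrightarrow> f i \<inter> f j = {}"
  shows "card (f ` I) = card I"
proof (rule card_image, rule inj_onI)
  fix i j assume "i \<in> I" "j \<in> I" "f i = f j"
  then show "i = j" using assms by blast
qed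

lemma shift_doubleton_eq:
  assumes "a < n" "a' < n" "0 < i" "0 < i'" "2 * i < n" "2 * i' < n"
    and "{a, shift n i a} = {a', shift n i' a'}"
  shows "i = i'"
  using assms(7) unfolding doubleton_eq_iff using assms(1-6) by (auto simp: shift_eq_if split: if_splits)

lemma A_fam_disjoint:
  assumes "0 < i" "0 < i'" "2 * i < n" "2 * i' < n" "i \<noteq> i'"
  shows "A_fam n i \<inter> A_fam n i' = {}"
proof -
  have False if e: "e \<in> A_fam n i" "e \<in> A_fam n i'" for e
  proof -
    obtain a a' where "a < n" "a' < n" "e = {a, shift n i a}" "e = {a', shift n i' a'}"
      using e unfolding A_fam_eq by blast
    then show False using shift_doubleton_eq[of a n a' i i'] assms by simp
  qed
  then show ?thesis by blast
qed

lemma B_fam_disjoint: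
  assumes "0 < i" "0 < i'" "2 * i < n" "2 * i' < n" "i \<noteq> i'"
  shows "B_fam n i \<inter> B_fam n i' = {}"
proof -
  have False if e: "e \<in> B_fam n i" "e \<in> B_fam n i'" for e
  proof -
    obtain a a' where "a < n" "a' < n" "e = {n + a, n + shift n i a}" "e = {n + a', n + shift n i' a'}"
      using e unfolding B_fam_eq by blast
    then have "{a, shift n i a} = {a', shift n i' a'}" by (auto simp: doubleton_eq_iff)
    then show False using shift_doubleton_eq[of a n a' i i'] assms \<open>a < n\<close> \<open>a' < n\<close> by simp
  qed
  then show ?thesis by blast
qed

lemma doubleton_in_A_fam:
  assumes "odd n" "x < n" "y < n" "x \<noteq> y"
  shows "\<exists>i. 0 < i \<and> 2 * i < n \<and> {x, y} \<in> A_fam n i"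
proof -
  have *: "\<exists>i. 0 < i \<and> 2 * i < n \<and> {x, y} \<in> A_fam n i" if "x < y" "x < n" "y < n" for x y
  proof (cases "2 * (y - x) < n")
    case True
    then have "{x, y} = {x, shift n (y - x) x}" using that by (simp add: shift_eq_if)
    then have "{x, y} \<in> A_fam n (y - x)" unfolding A_fam_eq using \<open>x < n\<close> by blast
    moreover have "0 < y - x" using that by simp
    ultimately show ?thesis using True by blast
  next
    case False
    then have "{x, y} = {y, shift n (n - (y - x)) y}" using that by (auto simp: shift_eq_if)
    then have "{x, y} \<in> A_fam n (n - (y - x))" unfolding A_fam_eq using \<open>y < n\<close> by blast
    moreover have "2 * (n - (y - x)) < n"
    proof -
      have "2 * (y - x) \<noteq> n" using \<open>odd n\<close> by auto
      then show ?thesis using False that by linarith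
    qed
    moreover have "0 < n - (y - x)" using that by simp
    ultimately show ?thesis by blast
  qed
  show ?thesis
  proof (cases "x < y")
    case True then show ?thesis using * assms by blast
  next
    case False then show ?thesis using *[of y x] assms by (simp add: insert_commute)
  qed
qed

lemma doubleton_in_B_fam:
  assumes "odd n" "n \<le> x" "x < 2 * n" "n \<le> y" "y < 2 * n" "x \<noteq> y"
  shows "\<exists>i. 0 < i \<and> 2 * i < n \<and> {x, y} \<in> B_fam n i"
proof -
  have "x - n < n" "y - n < n" "x - n \<noteq> y - n" using assms by auto
  then obtain i where i: "0 < i" "2 * i < n" "{x - n, y - n} \<in> A_fam n i"
    using doubleton_in_A_fam[OF assms(1)] by blast
  then obtain a where "a < n" "{x - n, y - n} = {a, shift n i a}" unfolding A_fam_eq by blast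
  moreover have "{x, y} = (+) n ` {x - n, y - n}" using assms by auto
  ultimately have "{x, y} = {n + a, n + shift n i a}" by simp
  then show ?thesis using i \<open>a < n\<close> unfolding B_fam_eq by blast
qed

lemma A_fam_lower: "e \<in> A_fam n i \<Longrightarrow> v \<in> e \<Longrightarrow> v < n"
  unfolding A_fam_def by auto

lemma B_fam_upper: "e \<in> B_fam n i \<Longrightarrow> v \<in> e \<Longrightarrow> n \<le> v"
  unfolding B_fam_def by auto

lemma A_fam_disjoint_B_fam: "A_fam n i \<inter> B_fam n j = {}"
proof -
  have False if "e \<in> A_fam n i" "e \<in> B_fam n j" for e
  proof -
    obtain x y where "e = {x, y}" using \<open>e \<in> A_fam n i\<close> unfolding A_fam_def by blast
    then show False using A_fam_lower[OF that(1)] B_fam_upper[OF that(2)] by (meson insertI1 not_le)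
  qed
  then show ?thesis by blast
qed

lemma A_fam_subset_edges_K:
  assumes "0 < i" "i < n"
  shows "A_fam n i \<subseteq> edges_K (2 * n)"
proof
  fix e assume "e \<in> A_fam n i"
  then obtain a where a: "a < n" "e = {a, shift n i a}" unfolding A_fam_eq by blast
  have "shift n i a < n" using shift_less[of n] a(1) by simp
  moreover have "a \<noteq> shift n i a" using shift_neq[of a n i] a(1) assms by metis
  ultimately show "e \<in> edges_K (2 * n)" using a by (simp add: edge_in_edges_K)
qed

lemma B_fam_subset_edges_K:
  assumes "0 < i" "i < n"
  shows "B_fam n i \<subseteq> edges_K (2 * n)"
proof
  fix e assume "e \<in> B_fam n i"
  then obtain a where a: "a < n" "e = {n + a, n + shift n i a}" unfolding B_fam_eq by blast
  have "shift n i a < n" using shift_less[of n] a(1) by simp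
  moreover have "a \<noteq> shift n i a" using shift_neq[of a n i] a(1) assms by metis
  ultimately show "e \<in> edges_K (2 * n)" using a by (simp add: edge_in_edges_K)
qed

text \<open>Row \<open>s k\<close> of a Latin square on \<open>{0..<n}\<close> that maps each cycle of step \<open>i\<close> onto itself,
  possibly reversing it; it therefore carries \<open>B\<^sub>i\<close> onto itself, which lets the colouring of \<open>B\<^sub>i\<close>
  mirror that of \<open>A\<^sub>i\<close>.\<close>

locale compatible_latin_square =
  fixes n :: nat and s :: "nat \<Rightarrow> nat \<Rightarrow> nat"
  assumes odd_n: "odd n"
    and s_less: "k < n \<Longrightarrow> a < n \<Longrightarrow> s k a < n"
    and s_inj: "k < n \<Longrightarrow> a < n \<Longrightarrow> a' < n \<Longrightarrow> s k a = s k a' \<Longrightarrow> a = a'"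
    and ex1_row: "a < n \<Longrightarrow> b < n \<Longrightarrow> \<exists>!k. k < n \<and> s k a = b"
    and s_shift: "k < n \<Longrightarrow> 0 < i \<Longrightarrow> 2 * i < n \<Longrightarrow>
      (\<forall>a<n. s k (shift n i a) = shift n i (s k a)) \<or>
      (\<forall>a<n. s k (shift n i a) = shift_back n i (s k a))"
begin

lemma n_pos: "0 < n"
  using odd_n by (simp add: odd_pos)

abbreviation half :: nat where "half \<equiv> (n - 1) div 2"

lemma double_less_if_le_half: "i \<le> half \<Longrightarrow> 2 * i < n"
  using n_pos by linarith

lemma s_surj:
  assumes "k < n" "b < n"
  obtains a where "a < n" "s k a = b"
proof -
  have "inj_on (s k) {..<n}"
    by (rule inj_onI) (use s_inj[OF \<open>k < n\<close>] in simp)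
  moreover have "s k ` {..<n} \<subseteq> {..<n}" using s_less[OF \<open>k < n\<close>] by auto
  ultimately have "s k ` {..<n} = {..<n}" by (simp add: endo_inj_surj)
  then show ?thesis using that \<open>b < n\<close> by (metis imageE lessThan_iff)
qed

definition cross :: "nat \<Rightarrow> nat set set" where
  "cross k = {{a, n + s k a} | a. a < n}"

definition layer :: "nat \<Rightarrow> nat set set" where
  "layer i = A_fam n i \<union> B_fam n i \<union> cross (i - 1)"

definition colour_class :: "nat \<Rightarrow> nat \<Rightarrow> nat set set" where
  "colour_class i c =
     {{a, shift n i a} | a. a < n \<and> cycle_colour n i a = c} \<union>
     {{n + s (i - 1) a, n + s (i - 1) (shift n i a)} | a. a < n \<and> cycle_colour n i a = c} \<union>
     {{a, n + s (i - 1) a} | a. a < n \<and>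
        third_colour (cycle_colour n i a) (cycle_colour n i (shift_back n i a)) = c}"

lemma cross_subset_edges_K:
  assumes "k < n"
  shows "cross k \<subseteq> edges_K (2 * n)"
proof
  fix e assume "e \<in> cross k"
  then obtain a where a: "a < n" "e = {a, n + s k a}" unfolding cross_def by blast
  then show "e \<in> edges_K (2 * n)" using s_less[OF assms a(1)] by (simp add: edge_in_edges_K)
qed

lemma cross_mixed: "e \<in> cross k \<Longrightarrow> (\<exists>x\<in>e. x < n) \<and> (\<exists>y\<in>e. n \<le> y)"
  unfolding cross_def by auto

lemma cross_one_factor:
  assumes k: "k < n"
  shows "one_factor (2 * n) (cross k)"
  unfolding one_factor_def
proof (intro conjI allI impI)
  show "cross k \<subseteq> edges_K (2 * n)" using cross_subset_edges_K[OF k] .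
  fix v assume v: "v < 2 * n"
  show "\<exists>!e. e \<in> cross k \<and> v \<in> e"
  proof (cases "v < n")
    case True
    show ?thesis
    proof (rule ex1I[of _ "{v, n + s k v}"])
      show "{v, n + s k v} \<in> cross k \<and> v \<in> {v, n + s k v}" unfolding cross_def using True by blast
      fix e assume "e \<in> cross k \<and> v \<in> e"
      then obtain a where "a < n" "e = {a, n + s k a}" "v \<in> e" unfolding cross_def by blast
      then show "e = {v, n + s k v}" using True by auto
    qed
  next
    case False
    have "v - n < n" using v by simp
    then obtain a where a: "a < n" "s k a = v - n" using s_surj[OF k] by blast
    show ?thesis
    proof (rule ex1I[of _ "{a, v}"])
      show "{a, v} \<in> cross k \<and> v \<in> {a, v}"
        using a False unfolding cross_def by (intro conjI CollectI exI[of _ a]) auto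
      fix e assume "e \<in> cross k \<and> v \<in> e"
      then obtain a' where a': "a' < n" "e = {a', n + s k a'}" "v \<in> e" unfolding cross_def by blast
      then have "s k a' = s k a" using False a by auto
      then have "a' = a" using s_inj[OF k a'(1) a(1)] by simp
      then show "e = {a, v}" using a' a False by auto
    qed
  qed
qed

lemma cross_disjoint:
  assumes "k < n" "k' < n" "k \<noteq> k'"
  shows "cross k \<inter> cross k' = {}"
proof -
  have False if e: "e \<in> cross k" "e \<in> cross k'" for e
  proof -
    obtain a a' where a: "a < n" "a' < n" "e = {a, n + s k a}" "e = {a', n + s k' a'}"
      using e unfolding cross_def by blast
    then have "a = a'" "s k a = s k' a'" by (auto simp: doubleton_eq_iff)
    then show False using ex1_row[OF a(1) s_less[OF assms(1) a(1)]] assms by metis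
  qed
  then show ?thesis by blast
qed

lemma doubleton_in_cross:
  assumes "x < n" "n \<le> y" "y < 2 * n"
  shows "\<exists>k<n. {x, y} \<in> cross k"
proof -
  have "y - n < n" using assms by simp
  then obtain k where k: "k < n" "s k x = y - n" using ex1_row[OF \<open>x < n\<close>] by blast
  then have "{x, y} = {x, n + s k x}" using assms by simp
  then show ?thesis unfolding cross_def using k(1) \<open>x < n\<close> by blast
qed

lemma B_fam_eq_row:
  assumes k: "k < n" and i: "0 < i" "2 * i < n"
  shows "B_fam n i = {{n + s k a, n + s k (shift n i a)} | a. a < n}"
proof (intro set_eqI iffI)
  fix e assume "e \<in> B_fam n i"
  then obtain b where b: "b < n" "e = {n + b, n + shift n i b}" unfolding B_fam_eq by blast
  from s_shift[OF k i] consider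
      "\<forall>a<n. s k (shift n i a) = shift n i (s k a)"
    | "\<forall>a<n. s k (shift n i a) = shift_back n i (s k a)" by blast
  then obtain a where "a < n" "e = {n + s k a, n + s k (shift n i a)}"
  proof cases
    case 1
    obtain a where "a < n" "s k a = b" using s_surj[OF k b(1)] by blast
    then show ?thesis using that 1 b by auto
  next
    case 2
    have "shift n i b < n" using shift_less n_pos by blast
    then obtain a where a: "a < n" "s k a = shift n i b" using s_surj[OF k] by blast
    then have "s k (shift n i a) = b" using 2 b i by (simp add: shift_back_shift)
    then show ?thesis using that a b by (auto simp: insert_commute)
  qed
  then show "e \<in> {{n + s k a, n + s k (shift n i a)} | a. a < n}" by blast
next
  fix e assume "e \<in> {{n + s k a, n + s k (shift n i a)} | a. a < n}"
  then obtain a where a: "a < n" "e = {n + s k a, n + s k (shift n i a)}" by blast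
  have sa: "s k a < n" using s_less[OF k a(1)] .
  from s_shift[OF k i] consider
      "\<forall>a<n. s k (shift n i a) = shift n i (s k a)"
    | "\<forall>a<n. s k (shift n i a) = shift_back n i (s k a)" by blast
  then obtain b where "b < n" "e = {n + b, n + shift n i b}"
  proof cases
    case 1
    then show ?thesis using that a sa by auto
  next
    case 2
    have "shift_back n i (s k a) < n" using shift_back_less n_pos by blast
    moreover have "e = {n + shift n i (shift_back n i (s k a)), n + shift_back n i (s k a)}"
      using a 2 sa i by (simp add: shift_shift_back insert_commute)
    ultimately show ?thesis using that by (auto simp: insert_commute)
  qed
  then show "e \<in> B_fam n i" unfolding B_fam_eq by blast
qed

lemma colour_class_subset_layer:
  assumes "0 < i" "2 * i < n"
  shows "colour_class i c \<subseteq> layer i"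
proof
  have "i - 1 < n" using assms by simp
  fix e assume "e \<in> colour_class i c"
  then consider a where "a < n" "e = {a, shift n i a}"
    | a where "a < n" "e = {n + s (i - 1) a, n + s (i - 1) (shift n i a)}"
    | a where "a < n" "e = {a, n + s (i - 1) a}"
    unfolding colour_class_def by blast
  then show "e \<in> layer i"
  proof cases
    case 1
    then have "e \<in> A_fam n i" unfolding A_fam_eq by blast
    then show ?thesis unfolding layer_def by blast
  next
    case 2
    then have "e \<in> B_fam n i" unfolding B_fam_eq_row[OF \<open>i - 1 < n\<close> assms] by blast
    then show ?thesis unfolding layer_def by blast
  next
    case 3
    then have "e \<in> cross (i - 1)" unfolding cross_def by blast
    then show ?thesis unfolding layer_def by blast
  qed
qed

lemma layer_subset_colour_classes:
  assumes "0 < i" "2 * i < n"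
  shows "layer i \<subseteq> colour_class i 1 \<union> colour_class i 2 \<union> colour_class i 3"
proof
  have "i - 1 < n" using assms by simp
  fix e assume "e \<in> layer i"
  then consider "e \<in> A_fam n i" | "e \<in> B_fam n i" | "e \<in> cross (i - 1)"
    unfolding layer_def by blast
  then obtain c where "c \<in> {1, 2, 3}" "e \<in> colour_class i c"
  proof cases
    case 1
    then obtain a where "a < n" "e = {a, shift n i a}" unfolding A_fam_eq by blast
    then have "e \<in> colour_class i (cycle_colour n i a)" unfolding colour_class_def by blast
    then show ?thesis using that cycle_colour_range by blast
  next
    case 2
    then obtain a where "a < n" "e = {n + s (i - 1) a, n + s (i - 1) (shift n i a)}"
      unfolding B_fam_eq_row[OF \<open>i - 1 < n\<close> assms] by blast
    then have "e \<in> colour_class i (cycle_colour n i a)" unfolding colour_class_def by blast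
    then show ?thesis using that cycle_colour_range by blast
  next
    case 3
    then obtain a where a: "a < n" "e = {a, n + s (i - 1) a}" unfolding cross_def by blast
    let ?c = "third_colour (cycle_colour n i a) (cycle_colour n i (shift_back n i a))"
    have "?c \<in> {1, 2, 3}"
      using third_colour_completes(1)[OF cycle_colour_range cycle_colour_range]
        cycle_colour_shift_back[OF \<open>a < n\<close> assms] by metis
    moreover have "e \<in> colour_class i ?c" using a unfolding colour_class_def by blast
    ultimately show ?thesis using that by blast
  qed
  then show "e \<in> colour_class i 1 \<union> colour_class i 2 \<union> colour_class i 3" by auto
qed

lemma colour_classes_union:
  assumes "0 < i" "2 * i < n"
  shows "colour_class i 1 \<union> colour_class i 2 \<union> colour_class i 3 = layer i"
  using colour_class_subset_layer[OF assms] layer_subset_colour_classes[OF assms] by blast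

lemma colour_class_incident_lower:
  assumes i: "0 < i" "2 * i < n" and v: "v < n"
  shows "e \<in> colour_class i c \<and> v \<in> e \<longleftrightarrow>
    (e = {v, shift n i v} \<and> cycle_colour n i v = c) \<or>
    (e = {shift_back n i v, v} \<and> cycle_colour n i (shift_back n i v) = c) \<or>
    (e = {v, n + s (i - 1) v} \<and>
      third_colour (cycle_colour n i v) (cycle_colour n i (shift_back n i v)) = c)"
    (is "?lhs \<longleftrightarrow> ?rhs")
proof
  assume lhs: ?lhs
  then consider a where "a < n" "cycle_colour n i a = c" "e = {a, shift n i a}"
    | a where "a < n" "e = {n + s (i - 1) a, n + s (i - 1) (shift n i a)}"
    | a where "a < n" "e = {a, n + s (i - 1) a}"
        "third_colour (cycle_colour n i a) (cycle_colour n i (shift_back n i a)) = c"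
    unfolding colour_class_def by blast
  then show ?rhs
  proof cases
    case (1 a)
    then have "v = a \<or> v = shift n i a" using lhs by auto
    then show ?thesis
    proof
      assume "v = shift n i a"
      then have "a = shift_back n i v" using 1 i by (simp add: shift_back_shift)
      then show ?thesis using 1 \<open>v = shift n i a\<close> by auto
    qed (use 1 in auto)
  next
    case (2 a)
    then show ?thesis using lhs v by auto
  next
    case (3 a)
    then have "v = a" using lhs v by auto
    then show ?thesis using 3 by auto
  qed
next
  have b: "shift_back n i v < n" using v shift_back_less[of n] by simp
  have "{shift_back n i v, v} = {shift_back n i v, shift n i (shift_back n i v)}"
    using v i by (simp add: shift_shift_back)
  then have "{shift_back n i v, v} \<in> colour_class i c" if "cycle_colour n i (shift_back n i v) = c"
    unfolding colour_class_def using that b by blast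
  moreover have "{v, shift n i v} \<in> colour_class i c" if "cycle_colour n i v = c"
    unfolding colour_class_def using that v by blast
  moreover have "{v, n + s (i - 1) v} \<in> colour_class i c"
    if "third_colour (cycle_colour n i v) (cycle_colour n i (shift_back n i v)) = c"
    unfolding colour_class_def using that v by blast
  ultimately show "?rhs \<Longrightarrow> ?lhs" by auto
qed

lemma colour_class_incident_upper:
  assumes i: "0 < i" "2 * i < n" and a: "a < n" and v: "v = n + s (i - 1) a"
  shows "e \<in> colour_class i c \<and> v \<in> e \<longleftrightarrow>
    (e = {v, n + s (i - 1) (shift n i a)} \<and> cycle_colour n i a = c) \<or>
    (e = {n + s (i - 1) (shift_back n i a), v} \<and> cycle_colour n i (shift_back n i a) = c) \<or>
    (e = {a, v} \<and> third_colour (cycle_colour n i a) (cycle_colour n i (shift_back n i a)) = c)"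
    (is "?lhs \<longleftrightarrow> ?rhs")
proof
  have k: "i - 1 < n" using i by simp
  assume lhs: ?lhs
  then consider a' where "a' < n" "e = {a', shift n i a'}"
    | a' where "a' < n" "cycle_colour n i a' = c"
        "e = {n + s (i - 1) a', n + s (i - 1) (shift n i a')}"
    | a' where "a' < n" "e = {a', n + s (i - 1) a'}"
        "third_colour (cycle_colour n i a') (cycle_colour n i (shift_back n i a')) = c"
    unfolding colour_class_def by blast
  then show ?rhs
  proof cases
    case (1 a')
    then show ?thesis using lhs v shift_less[of n i a'] by auto
  next
    case (2 a')
    have "shift n i a' < n" using shift_less[of n] \<open>a' < n\<close> by simp
    moreover have "s (i - 1) a = s (i - 1) a' \<or> s (i - 1) a = s (i - 1) (shift n i a')"
      using lhs v 2 by auto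
    ultimately have "a = a' \<or> a = shift n i a'" using s_inj[OF k a] \<open>a' < n\<close> by blast
    then show ?thesis
    proof
      assume "a = shift n i a'"
      then have "a' = shift_back n i a" using 2 i by (simp add: shift_back_shift)
      then show ?thesis using 2 v \<open>a = shift n i a'\<close> by auto
    qed (use 2 v in auto)
  next
    case (3 a')
    then have "s (i - 1) a' = s (i - 1) a" using lhs v by auto
    then have "a' = a" using s_inj[OF k \<open>a' < n\<close> a] by blast
    then show ?thesis using 3 v by auto
  qed
next
  have b: "shift_back n i a < n" using a shift_back_less[of n] by simp
  have "{n + s (i - 1) (shift_back n i a), v} =
      {n + s (i - 1) (shift_back n i a), n + s (i - 1) (shift n i (shift_back n i a))}"
    using a i v by (simp add: shift_shift_back)
  then have "{n + s (i - 1) (shift_back n i a), v} \<in> colour_class i c"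
    if "cycle_colour n i (shift_back n i a) = c"
    unfolding colour_class_def using that b by blast
  moreover have "{v, n + s (i - 1) (shift n i a)} \<in> colour_class i c" if "cycle_colour n i a = c"
    unfolding colour_class_def using that a v by blast
  moreover have "{a, v} \<in> colour_class i c"
    if "third_colour (cycle_colour n i a) (cycle_colour n i (shift_back n i a)) = c"
    unfolding colour_class_def using that a v by blast
  ultimately show "?rhs \<Longrightarrow> ?lhs" using v by auto
qed

lemma incident_edges:
  assumes i: "0 < i" "2 * i < n" and v: "v < 2 * n"
  obtains E1 E2 E3 c1 c2 where "distinct [E1, E2, E3]"
    "c1 \<in> {1, 2, 3}" "c2 \<in> {1, 2, 3}" "c1 \<noteq> c2"
    "\<And>c e. e \<in> colour_class i c \<and> v \<in> e \<longleftrightarrow>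
      (e = E1 \<and> c1 = c) \<or> (e = E2 \<and> c2 = c) \<or> (e = E3 \<and> third_colour c1 c2 = c)"
proof (cases "v < n")
  case True
  have "shift n i v < n" "shift_back n i v < n" using True shift_less[of n] shift_back_less[of n] by auto
  moreover have "shift n i v \<noteq> shift_back n i v" "shift n i v \<noteq> v"
    using shift_neq_shift_back[OF True i] shift_neq[OF True i(1)] i by auto
  ultimately have "distinct [{v, shift n i v}, {shift_back n i v, v}, {v, n + s (i - 1) v}]"
    by (auto simp: doubleton_eq_iff)
  then show ?thesis
    by (rule that[OF _ cycle_colour_range cycle_colour_range
          not_sym[OF cycle_colour_shift_back[OF True i]] colour_class_incident_lower[OF i True]])
next
  case False
  have k: "i - 1 < n" using i by simp
  have "v - n < n" using v by simp
  then obtain a where a: "a < n" "s (i - 1) a = v - n" using s_surj[OF k] by blast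
  have v_eq: "v = n + s (i - 1) a" using a False by simp
  have sh: "shift n i a < n" "shift_back n i a < n"
    using a shift_less[of n] shift_back_less[of n] by auto
  have "s (i - 1) (shift n i a) \<noteq> s (i - 1) (shift_back n i a)"
    using s_inj[OF k sh] shift_neq_shift_back[OF a(1) i] by blast
  moreover have "s (i - 1) (shift n i a) \<noteq> s (i - 1) a"
    using s_inj[OF k sh(1) a(1)] shift_neq[OF a(1) i(1)] i by auto
  ultimately have
    "distinct [{v, n + s (i - 1) (shift n i a)}, {n + s (i - 1) (shift_back n i a), v}, {a, v}]"
    using v_eq a by (auto simp: doubleton_eq_iff)
  then show ?thesis
    by (rule that[OF _ cycle_colour_range cycle_colour_range
          not_sym[OF cycle_colour_shift_back[OF a(1) i]] colour_class_incident_upper[OF i a(1) v_eq]])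
qed

lemma layer_subset_edges_K:
  assumes "0 < i" "2 * i < n"
  shows "layer i \<subseteq> edges_K (2 * n)"
proof -
  have "i < n" "i - 1 < n" using assms by simp_all
  then show ?thesis
    unfolding layer_def using A_fam_subset_edges_K B_fam_subset_edges_K cross_subset_edges_K assms
    by (intro Un_least) simp_all
qed

lemma colour_class_one_factor:
  assumes i: "0 < i" "2 * i < n" and c: "c \<in> {1, 2, 3}"
  shows "one_factor (2 * n) (colour_class i c)"
  unfolding one_factor_def
proof (intro conjI allI impI)
  show "colour_class i c \<subseteq> edges_K (2 * n)"
    using colour_class_subset_layer[OF i] layer_subset_edges_K[OF i] by blast
  fix v assume v: "v < 2 * n"
  obtain E1 E2 E3 c1 c2 where "distinct [E1, E2, E3]"
    "c1 \<in> {1, 2, 3}" "c2 \<in> {1, 2, 3}" "c1 \<noteq> c2"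
    and incident: "\<And>c e. e \<in> colour_class i c \<and> v \<in> e \<longleftrightarrow>
      (e = E1 \<and> c1 = c) \<or> (e = E2 \<and> c2 = c) \<or> (e = E3 \<and> third_colour c1 c2 = c)"
    by (rule incident_edges[OF i v]) (rule that)
  show "\<exists>!e. e \<in> colour_class i c \<and> v \<in> e"
    by (rule ex1_incident_edge_of_colour[OF incident]) fact+
qed

lemma colour_classes_disjoint:
  assumes i: "0 < i" "2 * i < n" and "c \<noteq> c'"
  shows "colour_class i c \<inter> colour_class i c' = {}"
proof -
  have False if e: "e \<in> colour_class i c" "e \<in> colour_class i c'" for e
  proof -
    have "e \<in> edges_K (2 * n)"
      using e colour_class_subset_layer[OF i] layer_subset_edges_K[OF i] by blast
    then obtain v where "v \<in> e" and v: "v < 2 * n" unfolding edges_K_def by blast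
    obtain E1 E2 E3 c1 c2 where "distinct [E1, E2, E3]"
      "c1 \<in> {1, 2, 3}" "c2 \<in> {1, 2, 3}" "c1 \<noteq> c2"
      and incident: "\<And>c e. e \<in> colour_class i c \<and> v \<in> e \<longleftrightarrow>
        (e = E1 \<and> c1 = c) \<or> (e = E2 \<and> c2 = c) \<or> (e = E3 \<and> third_colour c1 c2 = c)"
      by (rule incident_edges[OF i v]) (rule that)
    have "c = c'"
      by (rule incident_edge_colour_unique[OF incident]) fact+
    then show False using \<open>c \<noteq> c'\<close> by blast
  qed
  then show ?thesis by blast
qed

lemma A_fam_disjoint_cross: "A_fam n i \<inter> cross k = {}"
  using A_fam_lower cross_mixed by (meson disjoint_iff not_le)

lemma B_fam_disjoint_cross: "B_fam n i \<inter> cross k = {}"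
  using B_fam_upper cross_mixed by (meson disjoint_iff not_le)

lemma layer_disjoint_cross:
  assumes "2 * i < n" "k < n" "k \<noteq> i - 1"
  shows "layer i \<inter> cross k = {}"
proof -
  have "cross (i - 1) \<inter> cross k = {}"
    using assms by (intro cross_disjoint) auto
  then show ?thesis
    using A_fam_disjoint_cross B_fam_disjoint_cross unfolding layer_def by blast
qed

lemma layers_disjoint:
  assumes "0 < i" "0 < i'" "2 * i < n" "2 * i' < n" "i \<noteq> i'"
  shows "layer i \<inter> layer i' = {}"
proof -
  have "layer i \<inter> cross (i' - 1) = {}" "layer i' \<inter> cross (i - 1) = {}"
    by (rule layer_disjoint_cross; use assms in auto)+
  then show ?thesis
    using A_fam_disjoint[OF assms] B_fam_disjoint[OF assms] A_fam_disjoint_B_fam[of n i i']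
      A_fam_disjoint_B_fam[of n i' i] unfolding layer_def by blast
qed

lemma edge_in_layer_or_cross:
  assumes "e \<in> edges_K (2 * n)"
  shows "(\<exists>i. 0 < i \<and> 2 * i < n \<and> e \<in> layer i) \<or> (\<exists>k. half \<le> k \<and> k < n \<and> e \<in> cross k)"
proof -
  obtain x y where e: "e = {x, y}" "x < 2 * n" "y < 2 * n" "x \<noteq> y"
    using assms unfolding edges_K_def by blast
  have in_layer: ?thesis if "0 < i" "2 * i < n" "e \<in> A_fam n i \<union> B_fam n i \<union> cross (i - 1)" for i
    using that unfolding layer_def by blast
  have mixed: ?thesis if xy: "x' < n" "n \<le> y'" "y' < 2 * n" "e = {x', y'}" for x' y'
  proof -
    obtain k where k: "k < n" "e \<in> cross k" using doubleton_in_cross xy by blast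
    show ?thesis
    proof (cases "half \<le> k")
      case False
      then have "2 * (k + 1) < n" using odd_n by presburger
      then show ?thesis using in_layer[of "k + 1"] k by simp
    qed (use k in blast)
  qed
  consider "x < n" "y < n" | "n \<le> x" "n \<le> y" | "x < n" "n \<le> y" | "n \<le> x" "y < n"
    by linarith
  then show ?thesis
  proof cases
    case 1
    then obtain i where "0 < i" "2 * i < n" "e \<in> A_fam n i"
      using doubleton_in_A_fam[OF odd_n _ _ e(4)] e(1) by blast
    then show ?thesis using in_layer by blast
  next
    case 2
    then obtain i where "0 < i" "2 * i < n" "e \<in> B_fam n i"
      using doubleton_in_B_fam[OF odd_n _ _ _ _ e(4)] e by blast
    then show ?thesis using in_layer by blast
  next
    case 3
    then show ?thesis using mixed e by blast
  next
    case 4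
    then show ?thesis using mixed[of y x] e by (simp add: insert_commute)
  qed
qed

lemma colour_classes_pairwise_disjoint:
  assumes "(i, c) \<in> {1..half} \<times> {1..3}" "(i', c') \<in> {1..half} \<times> {1..3}" "(i, c) \<noteq> (i', c')"
  shows "colour_class i c \<inter> colour_class i' c' = {}"
proof -
  have i: "0 < i" "2 * i < n" and i': "0 < i'" "2 * i' < n"
    using assms(1,2) double_less_if_le_half by auto
  show ?thesis
  proof (cases "i = i'")
    case True
    then show ?thesis using colour_classes_disjoint[OF i] assms(3) by simp
  next
    case False
    then show ?thesis
      using layers_disjoint[OF i(1) i'(1) i(2) i'(2)] colour_class_subset_layer[OF i, of c]
        colour_class_subset_layer[OF i', of c'] by blast
  qed
qed

lemma colour_class_disjoint_cross:
  assumes "i \<in> {1..half}" "k \<in> {half..<n}"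
  shows "colour_class i c \<inter> cross k = {}"
proof -
  have i: "0 < i" "2 * i < n" using assms(1) double_less_if_le_half by auto
  have "layer i \<inter> cross k = {}" using assms by (intro layer_disjoint_cross) auto
  then show ?thesis using colour_class_subset_layer[OF i] by blast
qed

definition factors :: "nat set set set" where
  "factors = (\<lambda>(i, c). colour_class i c) ` ({1..half} \<times> {1..3}) \<union> cross ` {half..<n}"

lemma factorsE:
  assumes "M \<in> factors"
  obtains i c where "i \<in> {1..half}" "c \<in> {1..3}" "M = colour_class i c"
    | k where "k \<in> {half..<n}" "M = cross k"
  using assms unfolding factors_def by blast

lemma factors_one_factor:
  assumes "M \<in> factors"
  shows "one_factor (2 * n) M"
proof (cases rule: factorsE[OF assms])
  case (1 i c)
  then have "0 < i" "2 * i < n" "c \<in> {1, 2, 3}" using double_less_if_le_half by auto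
  then show ?thesis using colour_class_one_factor 1(3) by simp
next
  case (2 k)
  then show ?thesis using cross_one_factor by simp
qed

lemma colour_class_in_factors: "i \<in> {1..half} \<Longrightarrow> c \<in> {1..3} \<Longrightarrow> colour_class i c \<in> factors"
  unfolding factors_def by (intro UnI1 image_eqI[of _ _ "(i, c)"]) simp_all

lemma cross_in_factors: "k \<in> {half..<n} \<Longrightarrow> cross k \<in> factors"
  unfolding factors_def by blast

lemma factor_nonempty: "M \<in> factors \<Longrightarrow> M \<noteq> {}"
  using one_factor_nonempty[OF factors_one_factor] n_pos by simp

lemma card_factors: "card factors = 2 * n - 1"
proof -
  have "card ((\<lambda>(i, c). colour_class i c) ` ({1..half} \<times> {1..3})) = card ({1..half} \<times> {1..(3::nat)})"
  proof (rule card_image_disjoint_nonempty)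
    fix p assume "p \<in> {1..half} \<times> {1..(3::nat)}"
    then show "(\<lambda>(i, c). colour_class i c) p \<noteq> {}"
      using colour_class_in_factors factor_nonempty by auto
  next
    fix p q assume "p \<in> {1..half} \<times> {1..(3::nat)}" "q \<in> {1..half} \<times> {1..(3::nat)}" "p \<noteq> q"
    then show "(\<lambda>(i, c). colour_class i c) p \<inter> (\<lambda>(i, c). colour_class i c) q = {}"
      using colour_classes_pairwise_disjoint by (cases p, cases q) simp
  qed
  moreover have "card (cross ` {half..<n}) = card {half..<n}"
    using cross_in_factors factor_nonempty cross_disjoint
    by (intro card_image_disjoint_nonempty) auto
  moreover have "(\<lambda>(i, c). colour_class i c) ` ({1..half} \<times> {1..3}) \<inter> cross ` {half..<n} = {}"
    using colour_class_disjoint_cross cross_in_factors factor_nonempty by fastforce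
  ultimately have "card factors = 3 * half + (n - half)"
    unfolding factors_def by (simp add: card_Un_disjoint)
  moreover have "n = 2 * half + 1" using odd_n by (elim oddE) simp
  ultimately show ?thesis by linarith
qed

lemma factors_pairwise_disjoint:
  assumes "M \<in> factors" "M' \<in> factors" "M \<noteq> M'"
  shows "M \<inter> M' = {}"
proof (cases rule: factorsE[OF assms(1)])
  case M: (1 i c)
  show ?thesis
  proof (cases rule: factorsE[OF assms(2)])
    case (1 i' c')
    then have "(i, c) \<noteq> (i', c')" using M assms(3) by auto
    then show ?thesis using colour_classes_pairwise_disjoint[of i c i' c'] M 1 by simp
  next
    case (2 k')
    then show ?thesis using M colour_class_disjoint_cross by simp
  qed
next
  case M: (2 k)
  show ?thesis
  proof (cases rule: factorsE[OF assms(2)])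
    case (1 i' c')
    then show ?thesis using M colour_class_disjoint_cross by blast
  next
    case (2 k')
    then show ?thesis using M assms(3) cross_disjoint by auto
  qed
qed

lemma edges_K_subset_factors: "edges_K (2 * n) \<subseteq> \<Union>factors"
proof
  fix e assume "e \<in> edges_K (2 * n)"
  then consider i where "0 < i" "2 * i < n" "e \<in> layer i"
    | k where "half \<le> k" "k < n" "e \<in> cross k"
    using edge_in_layer_or_cross by blast
  then show "e \<in> \<Union>factors"
  proof cases
    case (1 i)
    then have "e \<in> colour_class i 1 \<union> colour_class i 2 \<union> colour_class i 3"
      using colour_classes_union[OF 1(1,2)] by simp
    moreover have "i \<in> {1..half}" using 1 by simp
    ultimately show ?thesis
      using colour_class_in_factors[of i 1] colour_class_in_factors[of i 2]
        colour_class_in_factors[of i 3] by auto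
  next
    case (2 k)
    then show ?thesis using cross_in_factors by auto
  qed
qed

lemma finite_factors: "finite factors"
  unfolding factors_def by simp

lemma one_factorization_factors: "one_factorization (2 * n) factors"
proof -
  have "\<Union>factors = edges_K (2 * n)"
    using edges_K_subset_factors factors_one_factor unfolding one_factor_def by blast
  then show ?thesis
    unfolding one_factorization_def
    using factors_one_factor factors_pairwise_disjoint finite_factors card_factors by blast
qed

definition factor_table :: "nat \<Rightarrow> nat \<Rightarrow> nat set set" where
  "factor_table i j = (if i \<le> half then colour_class i j else cross (3 * i + j - (n + 3)))"

lemma factors_eq:
  "factors = {colour_class i j | i j. 1 \<le> i \<and> i \<le> half \<and> 1 \<le> j \<and> j \<le> 3} \<union>
     {cross k | k. half \<le> k \<and> k \<le> n - 1}"
proof -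
  have "(\<lambda>(i, c). colour_class i c) ` ({1..half} \<times> {1..3}) =
      {colour_class i j | i j. 1 \<le> i \<and> i \<le> half \<and> 1 \<le> j \<and> j \<le> 3}"
    by force
  moreover have "cross ` {half..<n} = {cross k | k. half \<le> k \<and> k \<le> n - 1}"
    using n_pos by force
  ultimately show ?thesis unfolding factors_def by simp
qed

lemma factor_table_union:
  assumes "1 \<le> i" "i \<le> half"
  shows "factor_table i 1 \<union> factor_table i 2 \<union> factor_table i 3 =
    A_fam n i \<union> B_fam n i \<union> cross (i - 1)"
  using assms colour_classes_union[of i] double_less_if_le_half[of i]
  unfolding factor_table_def layer_def by simp

lemma factor_table_lower: "i \<le> half \<Longrightarrow> factor_table i j = colour_class i j"
  unfolding factor_table_def by simp

lemma factor_table_family_lower: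
  "{factor_table i j | i j. 1 \<le> i \<and> i \<le> half \<and> 1 \<le> j \<and> j \<le> 3} \<union>
     {cross k | k. half \<le> k \<and> k \<le> n - 1} = factors"
proof -
  have "{factor_table i j | i j. 1 \<le> i \<and> i \<le> half \<and> 1 \<le> j \<and> j \<le> 3} =
      {colour_class i j | i j. 1 \<le> i \<and> i \<le> half \<and> 1 \<le> j \<and> j \<le> 3}"
    using factor_table_lower by metis
  then show ?thesis unfolding factors_eq by simp
qed

lemma factor_table_upper:
  assumes "half < i"
  shows "factor_table i 1 = cross (3 * i - n - 2) \<and> factor_table i 2 = cross (3 * i - n - 1) \<and>
    factor_table i 3 = cross (3 * i - n)"
  using assms unfolding factor_table_def by (simp add: numeral_eq_Suc)

lemma factor_table_family_mod5:
  assumes "n mod 6 = 5"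
  shows "{factor_table i j | i j. 1 \<le> i \<and> i \<le> (2 * n - 1) div 3 \<and> 1 \<le> j \<and> j \<le> 3} = factors"
proof -
  have "n = 6 * (n div 6) + 5" using assms div_mult_mod_eq[of n 6] by simp
  then obtain q where q: "n = 6 * q + 5" by blast
  then have p: "(2 * n - 1) div 3 = 4 * q + 3" and h: "half = 3 * q + 2" by simp_all
  show ?thesis
  proof (intro set_eqI iffI)
    fix M assume "M \<in> {factor_table i j | i j. 1 \<le> i \<and> i \<le> (2 * n - 1) div 3 \<and> 1 \<le> j \<and> j \<le> 3}"
    then obtain i j where ij: "M = factor_table i j" "1 \<le> i" "i \<le> 4 * q + 3" "1 \<le> j" "j \<le> 3"
      unfolding p by blast
    show "M \<in> factors"
    proof (cases "i \<le> half")
      case True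
      then show ?thesis using ij colour_class_in_factors by (simp add: factor_table_def)
    next
      case False
      then have "half \<le> 3 * i + j - (n + 3)" "3 * i + j - (n + 3) < n" using ij q h by linarith+
      then have "3 * i + j - (n + 3) \<in> {half..<n}" by simp
      then show ?thesis using ij False cross_in_factors by (simp add: factor_table_def)
    qed
  next
    fix M assume "M \<in> factors"
    then show "M \<in> {factor_table i j | i j. 1 \<le> i \<and> i \<le> (2 * n - 1) div 3 \<and> 1 \<le> j \<and> j \<le> 3}"
    proof (cases rule: factorsE)
      case (1 i c)
      then have "M = factor_table i c" "i \<le> (2 * n - 1) div 3"
        using p h by (simp_all add: factor_table_def)
      then show ?thesis using 1 by auto
    next
      case (2 k)
      define i where "i = (k + n + 2) div 3"
      define j where "j = (k + n + 2) mod 3 + 1"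
      have "3 * i + j = k + n + 3" unfolding i_def j_def by simp
      moreover have "half < i" "i \<le> 4 * q + 3"
      proof -
        have "half \<le> k" "k < n" using 2(1) by simp_all
        then show "half < i" "i \<le> 4 * q + 3" using q h unfolding i_def by linarith+
      qed
      moreover have "1 \<le> j" "j \<le> 3" unfolding j_def by simp_all
      ultimately have "M = factor_table i j" "1 \<le> i" "i \<le> (2 * n - 1) div 3" "1 \<le> j" "j \<le> 3"
        using 2 p by (simp_all add: factor_table_def)
      then show ?thesis by blast
    qed
  qed
qed

lemma lemma6_prop_factor_table:
  assumes X: "\<And>k. k < n \<Longrightarrow> X k = cross k"
  shows "lemma6_prop n X factor_table"
proof -
  have "X k = cross k" if "k \<le> n - 1" for k
    using X that n_pos by simp
  then have "{X k | k. half \<le> k \<and> k \<le> n - 1} = {cross k | k. half \<le> k \<and> k \<le> n - 1}"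
    by blast
  moreover have
    "factor_table i 1 \<union> factor_table i 2 \<union> factor_table i 3 = A_fam n i \<union> B_fam n i \<union> X (i - 1)"
    if "1 \<le> i" "i \<le> half" for i
  proof -
    have "i - 1 < n" using that double_less_if_le_half by simp
    show ?thesis unfolding X[OF \<open>i - 1 < n\<close>] by (rule factor_table_union[OF that])
  qed
  moreover have "factor_table i 1 = X (3 * i - n - 2) \<and> factor_table i 2 = X (3 * i - n - 1) \<and>
      factor_table i 3 = X (3 * i - n)" if "(n + 1) div 2 \<le> i" "i \<le> (2 * n - 1) div 3" for i
  proof -
    have "(n + 1) div 2 = half + 1" using odd_n by (elim oddE) simp
    then have "half < i" using that by linarith
    moreover have "3 * i - n < n" using that n_pos by linarith
    ultimately show ?thesis using factor_table_upper X by simp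
  qed
  ultimately show ?thesis
    unfolding lemma6_prop_def
    using one_factorization_factors factor_table_family_lower factor_table_family_mod5 by simp
qed

end

lemma compatible_latin_square_C_fam:
  assumes "odd n"
  shows "compatible_latin_square n (\<lambda>k a. shift_back n a k)"
proof
  fix k a a' assume "k < n" "a < n" "a' < n" "shift_back n a k = shift_back n a' k"
  then show "a = a'" by (auto simp: shift_back_eq_if split: if_splits)
next
  fix a b assume "a < n" "b < n"
  then show "\<exists>!k. k < n \<and> shift_back n a k = b"
    by (intro ex1I[of _ "shift n a b"])
      (auto simp: shift_less shift_back_shift intro: shift_shift_back[symmetric])
next
  fix k i assume "k < n" "0 < i" "2 * i < n"
  then have "shift_back n (shift n i a) k = shift_back n i (shift_back n a k)" if "a < n" for a
    using that by (auto simp: shift_eq_if shift_back_eq_if)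
  then show "(\<forall>a<n. shift_back n (shift n i a) k = shift n i (shift_back n a k)) \<or>
      (\<forall>a<n. shift_back n (shift n i a) k = shift_back n i (shift_back n a k))" by blast
qed (use assms in \<open>simp_all add: shift_back_less odd_pos\<close>)

lemma compatible_latin_square_D_fam:
  assumes "odd n"
  shows "compatible_latin_square n (shift n)"
proof
  fix k a a' assume "k < n" "a < n" "a' < n" "shift n k a = shift n k a'"
  then show "a = a'" by (auto simp: shift_eq_if split: if_splits)
next
  fix a b assume "a < n" "b < n"
  moreover have "shift n k a = shift n a k" for k by (simp add: shift_def add.commute)
  ultimately show "\<exists>!k. k < n \<and> shift n k a = b"
    by (intro ex1I[of _ "shift_back n a b"])
      (auto simp: shift_back_less shift_shift_back intro: shift_back_shift[symmetric])
next
  fix k i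
  have "shift n k (shift n i a) = shift n i (shift n k a)" for a
    unfolding shift_def by (simp add: mod_add_right_eq ac_simps)
  then show "(\<forall>a<n. shift n k (shift n i a) = shift n i (shift n k a)) \<or>
      (\<forall>a<n. shift n k (shift n i a) = shift_back n i (shift n k a))" by blast
qed (use assms in \<open>simp_all add: shift_less odd_pos\<close>)

theorem lemma6:
  fixes n :: nat
  assumes "n \<ge> 7" and "n mod 6 = 1 \<or> n mod 6 = 5"
  shows "(\<exists>R. lemma6_prop n (C_fam n) R) \<and> (\<exists>T. lemma6_prop n (D_fam n) T)"
proof -
  have "odd n" using assms(2) by presburger
  interpret C: compatible_latin_square n "\<lambda>k a. shift_back n a k"
    using compatible_latin_square_C_fam[OF \<open>odd n\<close>] .
  interpret D: compatible_latin_square n "shift n"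
    using compatible_latin_square_D_fam[OF \<open>odd n\<close>] .
  have "lemma6_prop n (C_fam n) C.factor_table"
    by (rule C.lemma6_prop_factor_table) (simp add: C_fam_eq C.cross_def)
  moreover have "lemma6_prop n (D_fam n) D.factor_table"
    by (rule D.lemma6_prop_factor_table) (simp add: D_fam_eq D.cross_def)
  ultimately show ?thesis by blast
qed

end
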